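(* Let $G$ be a finite group and $S\in\mathcal F(G)$. (1) If $S'\in\mathcal F(G)$ and $S\sim S'$, then $\pi(S)=\pi(S')$. (2) Let $S'\in\mathcal F(G)$. If either (a) $S,S'\in\mathcal F(\mathsf Z(G))$, or (b) there is $g\in\pi(S)$ with $\pi(S)=gG'$, then $S\sim S'$ if and only if $\pi(S)=\pi(S')$. (3) If $g,h\in G$ with $g\neq h$, then the one-term sequences $g$ and $h$ satisfy $g\not\sim h$; in particular $|G|\le|\mathcal C(\mathcal B(G),\mathcal F(G))|$. (4) If $g\in\mathsf Z(G)$ and $h\in G$, then $g\boldsymbol{\cdot}h\sim gh$ (the latter being the one-term sequence consisting of the product $gh$). (5) $|\pi(S)|=1$ if and only if the subgroup $\langle\mathrm{supp}(S)\rangle$ is abelian.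
   Context: Let $G$ be a finite group written multiplicatively with identity $1_G$; $G'$ is its commutator subgroup and $\mathsf Z(G)$ its center. $\mathcal F(G_0)$ (for $G_0\subset G$) is the free abelian monoid with basis $G_0$; its elements are sequences $S=g_1\boldsymbol{\cdot}\ldots\boldsymbol{\cdot}g_\ell$ (unordered, repetitions allowed; operation $\boldsymbol{\cdot}$ is concatenation, identity the empty sequence $1_{\mathcal F(G)}$), $\mathrm{supp}(S)$ is the set of distinct terms. $\pi(S)=\{g_{\tau(1)}\cdots g_{\tau(\ell)}:\tau\text{ a permutation of }[1,\ell]\}\subset G$, with $\pi(1_{\mathcal F(G)})=\{1_G\}$. $\mathcal B(G)=\{S\in\mathcal F(G):1_G\in\pi(S)\}$. For $S,S'\in\mathcal F(G)$, write $S\sim S'$ if for all $T\in\mathcal F(G)$: $S\boldsymbol{\cdot}T\in\mathcal B(G)\iff S'\boldsymbol{\cdot}T\in\mathcal B(G)$. This is a congruence on $\mathcal F(G)$; $[S]$ denotes the class of $S$, and the class semigroup $\mathcal C(\mathcal B(G),\mathcal F(G))=\{[S]:S\in\mathcal F(G)\}$ is a commutative semigroup written additively, $[S]+[T]=[S\boldsymbol{\cdot}T]$, with zero $[1_{\mathcal F(G)}]$. *)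

theory Defs
  imports "HOL-Algebra.Algebra" "HOL-Library.Multiset"
begin

definition seqs :: "('a, 'b) monoid_scheme \<Rightarrow> 'a set \<Rightarrow> 'a multiset set" where
  "seqs G G0 = {S. set_mset S \<subseteq> G0}"

definition lprod :: "('a, 'b) monoid_scheme \<Rightarrow> 'a list \<Rightarrow> 'a" where
  "lprod G xs = foldr (\<lambda>x y. x \<otimes>\<^bsub>G\<^esub> y) xs \<one>\<^bsub>G\<^esub>"

definition prods :: "('a, 'b) monoid_scheme \<Rightarrow> 'a multiset \<Rightarrow> 'a set" where
  "prods G S = {lprod G xs | xs. mset xs = S}"

definition zss :: "('a, 'b) monoid_scheme \<Rightarrow> 'a multiset set" where
  "zss G = {S \<in> seqs G (carrier G). \<one>\<^bsub>G\<^esub> \<in> prods G S}"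

definition seq_equiv :: "('a, 'b) monoid_scheme \<Rightarrow> 'a multiset \<Rightarrow> 'a multiset \<Rightarrow> bool" where
  "seq_equiv G S S' \<longleftrightarrow>
     (\<forall>T \<in> seqs G (carrier G). (S + T \<in> zss G) \<longleftrightarrow> (S' + T \<in> zss G))"

definition seq_class :: "('a, 'b) monoid_scheme \<Rightarrow> 'a multiset \<Rightarrow> 'a multiset set" where
  "seq_class G S = {S' \<in> seqs G (carrier G). seq_equiv G S S'}"

definition class_semigroup :: "('a, 'b) monoid_scheme \<Rightarrow> 'a multiset set set" where
  "class_semigroup G = seq_class G ` seqs G (carrier G)"

definition grp_center :: "('a, 'b) monoid_scheme \<Rightarrow> 'a set" where
  "grp_center G = {z \<in> carrier G. \<forall>x \<in> carrier G. z \<otimes>\<^bsub>G\<^esub> x = x \<otimes>\<^bsub>G\<^esub> z}"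

end

theory Submission
  imports Defs
begin

text \<open>
  Deciding \<open>g \<in> \<pi>(S)\<close> is the same as deciding whether \<open>S \<cdot> g\<^sup>-\<^sup>1\<close> is product-one, so
  equivalent sequences have equal product sets. Conversely \<open>\<pi>(S) = \<pi>(S')\<close> implies
  \<open>S \<sim> S'\<close> as soon as both sequences are multiplicative, i.e. \<open>\<pi>(S \<cdot> T) = \<pi>(S) \<pi>(T)\<close>
  for all \<open>T\<close>. This holds when \<open>S\<close> is central, because central terms can be pulled out of
  any ordering, and when \<open>\<pi>(S)\<close> is a coset of \<open>G'\<close>, because all orderings of a sequence
  have the same product modulo \<open>G'\<close>. Finally \<open>\<pi>(S)\<close> is a singleton iff the terms of \<open>S\<close>
  commute pairwise: two orderings differing by a swap of their first two factors have
  different products unless those factors commute.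
\<close>

lemma mset_eq_add_mset_split:
  assumes "mset xs = add_mset x S"
  obtains ys zs where "xs = ys @ x # zs" "mset (ys @ zs) = S"
proof -
  have "x \<in> set xs" using assms by (metis set_mset_mset union_single_eq_member)
  then obtain ys zs where "xs = ys @ x # zs" by (meson split_list)
  with assms show thesis by (intro that) auto
qed

lemma mset_in_seqs_iff:
  "mset xs \<in> seqs G A \<longleftrightarrow> set xs \<subseteq> A"
  by (simp add: seqs_def)

lemma seqs_empty [simp]: "{#} \<in> seqs G A"
  by (simp add: seqs_def)

lemma seqs_add [simp]: "S + T \<in> seqs G A \<longleftrightarrow> S \<in> seqs G A \<and> T \<in> seqs G A"
  by (auto simp: seqs_def)

lemma seqs_add_mset [simp]: "add_mset x S \<in> seqs G A \<longleftrightarrow> x \<in> A \<and> S \<in> seqs G A"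
  by (auto simp: seqs_def)

context monoid
begin

lemma lprod_Nil [simp]: "lprod G [] = \<one>"
  by (simp add: lprod_def)

lemma lprod_Cons [simp]: "lprod G (x # xs) = x \<otimes> lprod G xs"
  by (simp add: lprod_def)

lemma lprod_closed [simp]: "set xs \<subseteq> carrier G \<Longrightarrow> lprod G xs \<in> carrier G"
  by (induction xs) auto

lemma lprod_append:
  "set xs \<subseteq> carrier G \<Longrightarrow> set ys \<subseteq> carrier G \<Longrightarrow> lprod G (xs @ ys) = lprod G xs \<otimes> lprod G ys"
  by (induction xs) (auto simp: m_assoc)

lemma lprod_commute:
  assumes "x \<in> carrier G" "set xs \<subseteq> carrier G" "\<forall>y \<in> set xs. x \<otimes> y = y \<otimes> x"
  shows "x \<otimes> lprod G xs = lprod G xs \<otimes> x"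
  using assms
proof (induction xs)
  case (Cons y xs)
  then have carr: "y \<in> carrier G" "lprod G xs \<in> carrier G" by auto
  have "x \<otimes> (y \<otimes> lprod G xs) = (x \<otimes> y) \<otimes> lprod G xs"
    using Cons.prems(1) carr by (simp add: m_assoc)
  also have "\<dots> = (y \<otimes> x) \<otimes> lprod G xs"
    using Cons.prems by simp
  also have "\<dots> = y \<otimes> (x \<otimes> lprod G xs)"
    using Cons.prems(1) carr by (simp add: m_assoc)
  also have "\<dots> = (y \<otimes> lprod G xs) \<otimes> x"
    using Cons carr by (simp add: m_assoc)
  finally show ?case by simp
qed simp

lemma lprod_perm:
  assumes "set xs \<subseteq> carrier G" "\<forall>x \<in> set xs. \<forall>y \<in> set xs. x \<otimes> y = y \<otimes> x"
    and "mset ys = mset xs"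
  shows "lprod G ys = lprod G xs"
  using assms
proof (induction xs arbitrary: ys)
  case (Cons x xs)
  then obtain as bs where ys: "ys = as @ x # bs" and xs: "mset (as @ bs) = mset xs"
    by (metis mset.simps(2) mset_eq_add_mset_split)
  have sets: "set (as @ bs) = set xs" by (metis xs set_mset_mset)
  then have carr: "set as \<subseteq> carrier G" "set bs \<subseteq> carrier G" "x \<in> carrier G"
    using Cons.prems(1) by auto
  have "x \<otimes> lprod G as = lprod G as \<otimes> x"
    using Cons.prems(2) sets carr by (intro lprod_commute) auto
  then have "lprod G ys = x \<otimes> lprod G (as @ bs)"
    using ys carr by (simp add: lprod_append flip: m_assoc)
  also have "lprod G (as @ bs) = lprod G xs"
    using Cons.IH[OF _ _ xs] Cons.prems by simp
  finally show ?case by simp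
qed simp

end

lemma (in group) lprod_hom:
  assumes "h \<in> hom G H" "group H" "set xs \<subseteq> carrier G"
  shows "h (lprod G xs) = lprod H (map h xs)"
proof -
  interpret group_hom G H h using assms by (simp add: group_hom_def group_hom_axioms_def)
  show ?thesis using assms(3) by (induction xs) auto
qed

context monoid
begin

lemma mem_prodsI: "mset xs = S \<Longrightarrow> lprod G xs \<in> prods G S"
  by (auto simp: prods_def)

lemma prods_subset_carrier: "S \<in> seqs G (carrier G) \<Longrightarrow> prods G S \<subseteq> carrier G"
  by (auto simp: prods_def seqs_def)

lemma prods_empty [simp]: "prods G {#} = {\<one>}"
  by (simp add: prods_def)

lemma prods_singleton [simp]: "x \<in> carrier G \<Longrightarrow> prods G {#x#} = {x}"
  by (simp add: prods_def)

lemma set_mult_prods_subset: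
  assumes "S \<in> seqs G (carrier G)" "T \<in> seqs G (carrier G)"
  shows "prods G S <#> prods G T \<subseteq> prods G (S + T)"
proof
  fix z assume "z \<in> prods G S <#> prods G T"
  then obtain xs ys where "mset xs = S" "mset ys = T" "z = lprod G xs \<otimes> lprod G ys"
    by (auto simp: set_mult_def prods_def)
  with assms show "z \<in> prods G (S + T)"
    by (metis lprod_append mem_prodsI mset_append mset_in_seqs_iff)
qed

end

lemma (in group) mem_prods_iff_zss:
  assumes "S \<in> seqs G (carrier G)" "g \<in> carrier G"
  shows "g \<in> prods G S \<longleftrightarrow> S + {#inv g#} \<in> zss G"
proof
  assume "g \<in> prods G S"
  then obtain xs where xs: "mset xs = S" "lprod G xs = g" by (auto simp: prods_def)
  then have "lprod G (xs @ [inv g]) = \<one>"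
    using assms by (simp add: lprod_append mset_in_seqs_iff flip: xs(1))
  then have "\<one> \<in> prods G (mset (xs @ [inv g]))" by (metis mem_prodsI)
  with xs assms show "S + {#inv g#} \<in> zss G" by (simp add: zss_def)
next
  assume "S + {#inv g#} \<in> zss G"
  then obtain ys where ys: "mset ys = add_mset (inv g) S" "lprod G ys = \<one>"
    by (auto simp: zss_def prods_def)
  from ys(1) obtain as bs where ab: "ys = as @ inv g # bs" "mset (as @ bs) = S"
    by (rule mset_eq_add_mset_split)
  then have carr: "set as \<subseteq> carrier G" "set bs \<subseteq> carrier G"
    using assms(1) by (auto simp: mset_in_seqs_iff)
  \<comment> \<open>rotating the product-one ordering puts \<open>g\<^sup>-\<^sup>1\<close> last\<close>
  have "lprod G as \<otimes> (inv g \<otimes> lprod G bs) = \<one>"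
    using ys ab carr assms by (simp add: lprod_append)
  then have "(inv g \<otimes> lprod G bs) \<otimes> lprod G as = \<one>"
    using carr assms by (simp add: inv_comm)
  then have "lprod G bs \<otimes> lprod G as = g"
    using carr assms by (simp add: m_assoc inv_solve_left')
  then have "lprod G (bs @ as) = g"
    using carr by (simp add: lprod_append)
  moreover have "mset (bs @ as) = S" using ab by (simp add: add.commute)
  ultimately show "g \<in> prods G S" by (metis mem_prodsI)
qed

lemma (in group) seq_equiv_imp_prods_eq:
  assumes "S \<in> seqs G (carrier G)" "S' \<in> seqs G (carrier G)" "seq_equiv G S S'"
  shows "prods G S = prods G S'"
proof -
  have "g \<in> prods G S \<longleftrightarrow> g \<in> prods G S'" if "g \<in> carrier G" for g
  proof -
    have "{#inv g#} \<in> seqs G (carrier G)" using that by simp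
    then have "S + {#inv g#} \<in> zss G \<longleftrightarrow> S' + {#inv g#} \<in> zss G"
      using assms(3) unfolding seq_equiv_def by blast
    with assms that show ?thesis by (simp only: mem_prods_iff_zss)
  qed
  with assms show ?thesis
    using prods_subset_carrier by blast
qed

lemma seq_equiv_if_prods_add_eq:
  assumes "\<And>T. T \<in> seqs G (carrier G) \<Longrightarrow> prods G (S + T) = prods G (S' + T)"
    and "S \<in> seqs G (carrier G) \<longleftrightarrow> S' \<in> seqs G (carrier G)"
  shows "seq_equiv G S S'"
  using assms by (auto simp: seq_equiv_def zss_def)

definition prods_multiplicative :: "('a, 'b) monoid_scheme \<Rightarrow> 'a multiset \<Rightarrow> bool" where
  "prods_multiplicative G S \<longleftrightarrow>
     (\<forall>T \<in> seqs G (carrier G). prods G (S + T) = prods G S <#>\<^bsub>G\<^esub> prods G T)"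

lemma seq_equiv_if_prods_eq:
  assumes "S \<in> seqs G (carrier G)" "S' \<in> seqs G (carrier G)"
    and "prods_multiplicative G S" "prods_multiplicative G S'" "prods G S = prods G S'"
  shows "seq_equiv G S S'"
  using assms by (intro seq_equiv_if_prods_add_eq) (auto simp: prods_multiplicative_def)

lemma (in group) single_not_seq_equiv:
  "g \<in> carrier G \<Longrightarrow> h \<in> carrier G \<Longrightarrow> g \<noteq> h \<Longrightarrow> \<not> seq_equiv G {#g#} {#h#}"
  using seq_equiv_imp_prods_eq[of "{#g#}" "{#h#}"] by auto

lemma (in group) card_carrier_le_card_class_semigroup:
  assumes "finite (class_semigroup G)"
  shows "card (carrier G) \<le> card (class_semigroup G)"
proof (rule card_inj_on_le[OF _ _ assms])
  show "inj_on (\<lambda>g. seq_class G {#g#}) (carrier G)"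
  proof (rule inj_onI)
    fix g h assume gh: "g \<in> carrier G" "h \<in> carrier G" "seq_class G {#g#} = seq_class G {#h#}"
    then have "{#h#} \<in> seq_class G {#g#}" by (simp add: seq_class_def seq_equiv_def)
    then have "seq_equiv G {#g#} {#h#}" by (simp add: seq_class_def)
    with gh single_not_seq_equiv show "g = h" by blast
  qed
  show "(\<lambda>g. seq_class G {#g#}) ` carrier G \<subseteq> class_semigroup G"
    by (auto simp: class_semigroup_def)
qed

subsection \<open>Central sequences\<close>

lemma seqs_grp_center_subset: "seqs G (grp_center G) \<subseteq> seqs G (carrier G)"
  by (auto simp: seqs_def grp_center_def)

lemma (in group) lprod_insert_central:
  assumes "z \<in> grp_center G" "set xs \<subseteq> carrier G" "set ys \<subseteq> carrier G"
  shows "lprod G (xs @ z # ys) = z \<otimes> lprod G (xs @ ys)"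
proof -
  have z: "z \<in> carrier G" using assms(1) by (simp add: grp_center_def)
  have "z \<otimes> lprod G xs = lprod G xs \<otimes> z"
    using assms by (intro lprod_commute) (auto simp: grp_center_def)
  with z assms(2,3) show ?thesis by (simp add: lprod_append flip: m_assoc)
qed

lemma (in group) lprod_insert_central_mult:
  assumes "z \<in> grp_center G" "h \<in> carrier G" "set xs \<subseteq> carrier G" "set ys \<subseteq> carrier G"
  shows "lprod G (xs @ (z \<otimes> h) # ys) = z \<otimes> lprod G (xs @ h # ys)"
proof -
  have "z \<in> carrier G" using assms(1) by (simp add: grp_center_def)
  then have "lprod G (xs @ (z \<otimes> h) # ys) = lprod G (xs @ z # h # ys)"
    using assms by (simp add: lprod_append m_assoc)
  with assms show ?thesis by (simp add: lprod_insert_central)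
qed

lemma (in group) prods_add_mset_central:
  assumes "z \<in> grp_center G" "T \<in> seqs G (carrier G)"
  shows "prods G (add_mset z T) = z <# prods G T"
proof
  show "prods G (add_mset z T) \<subseteq> z <# prods G T"
  proof
    fix p assume "p \<in> prods G (add_mset z T)"
    then obtain xs where xs: "mset xs = add_mset z T" "p = lprod G xs" by (auto simp: prods_def)
    from xs(1) obtain as bs where ab: "xs = as @ z # bs" "mset (as @ bs) = T"
      by (rule mset_eq_add_mset_split)
    with assms have "p = z \<otimes> lprod G (as @ bs)"
      using xs(2) lprod_insert_central by (auto simp: mset_in_seqs_iff)
    moreover have "lprod G (as @ bs) \<in> prods G T" using ab(2) by (rule mem_prodsI)
    ultimately show "p \<in> z <# prods G T" by (auto simp: l_coset_def)
  qed
  show "z <# prods G T \<subseteq> prods G (add_mset z T)"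
  proof
    fix p assume "p \<in> z <# prods G T"
    then obtain t where "mset t = T" "p = z \<otimes> lprod G t" by (auto simp: l_coset_def prods_def)
    then show "p \<in> prods G (add_mset z T)" by (metis lprod_Cons mem_prodsI mset.simps(2))
  qed
qed

lemma (in group) prods_add_mset_central_mult:
  assumes "z \<in> grp_center G" "h \<in> carrier G" "T \<in> seqs G (carrier G)"
  shows "prods G (add_mset (z \<otimes> h) T) = z <# prods G (add_mset h T)"
proof
  show "prods G (add_mset (z \<otimes> h) T) \<subseteq> z <# prods G (add_mset h T)"
  proof
    fix p assume "p \<in> prods G (add_mset (z \<otimes> h) T)"
    then obtain xs where xs: "mset xs = add_mset (z \<otimes> h) T" "p = lprod G xs"
      by (auto simp: prods_def)
    from xs(1) obtain as bs where ab: "xs = as @ (z \<otimes> h) # bs" "mset (as @ bs) = T"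
      by (rule mset_eq_add_mset_split)
    with assms have "p = z \<otimes> lprod G (as @ h # bs)"
      using xs(2) lprod_insert_central_mult by (auto simp: mset_in_seqs_iff)
    moreover have "lprod G (as @ h # bs) \<in> prods G (add_mset h T)"
      using ab(2) by (intro mem_prodsI) simp
    ultimately show "p \<in> z <# prods G (add_mset h T)" by (auto simp: l_coset_def)
  qed
  show "z <# prods G (add_mset h T) \<subseteq> prods G (add_mset (z \<otimes> h) T)"
  proof
    fix p assume "p \<in> z <# prods G (add_mset h T)"
    then obtain ys where ys: "mset ys = add_mset h T" "p = z \<otimes> lprod G ys"
      by (auto simp: l_coset_def prods_def)
    from ys(1) obtain as bs where ab: "ys = as @ h # bs" "mset (as @ bs) = T"
      by (rule mset_eq_add_mset_split)
    with assms have "p = lprod G (as @ (z \<otimes> h) # bs)"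
      using ys(2) lprod_insert_central_mult by (auto simp: mset_in_seqs_iff)
    moreover have "mset (as @ (z \<otimes> h) # bs) = add_mset (z \<otimes> h) T" using ab(2) by simp
    ultimately show "p \<in> prods G (add_mset (z \<otimes> h) T)" by (auto intro: mem_prodsI)
  qed
qed

lemma (in group) prods_multiplicative_central:
  assumes "S \<in> seqs G (grp_center G)"
  shows "prods_multiplicative G S"
  unfolding prods_multiplicative_def
proof
  fix T assume T: "T \<in> seqs G (carrier G)"
  from assms show "prods G (S + T) = prods G S <#> prods G T"
  proof (induction S)
    case empty
    then show ?case
      using T by (simp add: lcos_mult_one prods_subset_carrier flip: l_coset_eq_set_mult)
  next
    case (add z S)
    then have z: "z \<in> grp_center G" "z \<in> carrier G" and S: "S \<in> seqs G (carrier G)"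
      using seqs_grp_center_subset by (auto simp: grp_center_def)
    have "prods G (add_mset z S + T) = z <# prods G (S + T)"
      using z S T by (simp add: prods_add_mset_central)
    also have "\<dots> = (z <# prods G S) <#> prods G T"
      using add z S T by (simp add: l_coset_eq_set_mult set_mult_assoc prods_subset_carrier)
    also have "z <# prods G S = prods G (add_mset z S)"
      using z S by (simp add: prods_add_mset_central)
    finally show ?case .
  qed
qed

lemma (in group) seq_equiv_central_pair_mult:
  assumes "g \<in> grp_center G" "h \<in> carrier G"
  shows "seq_equiv G {#g, h#} {#g \<otimes> h#}"
proof (rule seq_equiv_if_prods_add_eq)
  show "prods G ({#g, h#} + T) = prods G ({#g \<otimes> h#} + T)" if "T \<in> seqs G (carrier G)" for T
    using assms that by (simp add: prods_add_mset_central prods_add_mset_central_mult)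
  show "{#g, h#} \<in> seqs G (carrier G) \<longleftrightarrow> {#g \<otimes> h#} \<in> seqs G (carrier G)"
    using assms by (simp add: grp_center_def)
qed

subsection \<open>Sequences whose products form a coset of the commutator subgroup\<close>

lemma (in group) lprod_perm_mod_derived:
  assumes "set xs \<subseteq> carrier G" "mset ys = mset xs"
  shows "derived G (carrier G) #> lprod G ys = derived G (carrier G) #> lprod G xs"
proof -
  let ?H = "derived G (carrier G)"
  interpret N: normal ?H G by (rule derived_self_is_normal)
  interpret K: comm_group "G Mod ?H" by (rule derived_quot_is_comm_group)
  have hom: "(\<lambda>a. ?H #> a) \<in> hom G (G Mod ?H)" by (rule N.r_coset_hom_Mod)
  have ys: "set ys \<subseteq> carrier G" using assms by (metis set_mset_mset)
  have carr: "set (map (\<lambda>a. ?H #> a) xs) \<subseteq> carrier (G Mod ?H)"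
    using hom assms(1) by (auto intro: hom_in_carrier)
  then have "\<forall>u \<in> set (map (\<lambda>a. ?H #> a) xs). \<forall>v \<in> set (map (\<lambda>a. ?H #> a) xs).
      u \<otimes>\<^bsub>G Mod ?H\<^esub> v = v \<otimes>\<^bsub>G Mod ?H\<^esub> u"
    using K.m_comm by blast
  with carr have "lprod (G Mod ?H) (map (\<lambda>a. ?H #> a) ys) = lprod (G Mod ?H) (map (\<lambda>a. ?H #> a) xs)"
    using assms(2) by (intro K.lprod_perm) simp_all
  then show ?thesis using lprod_hom[OF hom K.is_group] assms(1) ys by simp
qed

lemma (in group) prods_multiplicative_derived_coset:
  assumes S: "S \<in> seqs G (carrier G)" and g: "g \<in> carrier G"
    and coset: "prods G S = g <# derived G (carrier G)"
  shows "prods_multiplicative G S"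
  unfolding prods_multiplicative_def
proof (intro ballI equalityI)
  let ?H = "derived G (carrier G)"
  interpret N: normal ?H G by (rule derived_self_is_normal)
  fix T assume T: "T \<in> seqs G (carrier G)"
  show "prods G S <#> prods G T \<subseteq> prods G (S + T)"
    using S T by (rule set_mult_prods_subset)
  show "prods G (S + T) \<subseteq> prods G S <#> prods G T"
  proof
    fix p assume "p \<in> prods G (S + T)"
    then obtain xs where xs: "mset xs = S + T" "p = lprod G xs" by (auto simp: prods_def)
    obtain s t where st: "mset s = S" "mset t = T" by (meson ex_mset)
    have "mset xs \<in> seqs G (carrier G)" using S T xs(1) by simp
    then have carr: "set s \<subseteq> carrier G" "set t \<subseteq> carrier G" "set xs \<subseteq> carrier G"
      using S T by (simp_all add: mset_in_seqs_iff flip: st)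
    have s: "lprod G s \<in> g <# ?H" using coset st(1) mem_prodsI by blast
    have "p \<in> ?H #> p" using carr xs(2) by (simp add: rcos_self N.subgroup_axioms)
    also have "?H #> p = ?H #> lprod G (s @ t)"
      unfolding xs(2) by (rule lprod_perm_mod_derived) (use carr xs st in auto)
    also have "\<dots> = (?H #> lprod G s) #> lprod G t"
      using carr by (simp add: lprod_append coset_mult_assoc N.subset)
    also have "?H #> lprod G s = lprod G s <# ?H"
      using carr by (simp add: N.coset_eq)
    also have "\<dots> = prods G S"
      using l_repr_independence[OF s g N.subgroup_axioms] coset by simp
    finally have "p \<in> prods G S #> lprod G t" .
    then show "p \<in> prods G S <#> prods G T"
      using mem_prodsI[OF st(2)] by (auto simp: r_coset_def set_mult_def)
  qed
qed

lemma (in group) seq_equiv_iff_prods_eq: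
  assumes S: "S \<in> seqs G (carrier G)" and S': "S' \<in> seqs G (carrier G)"
    and "(S \<in> seqs G (grp_center G) \<and> S' \<in> seqs G (grp_center G))
      \<or> (\<exists>g \<in> prods G S. prods G S = g <# derived G (carrier G))"
  shows "seq_equiv G S S' \<longleftrightarrow> prods G S = prods G S'"
proof
  assume "seq_equiv G S S'"
  with S S' show "prods G S = prods G S'" by (rule seq_equiv_imp_prods_eq)
next
  assume eq: "prods G S = prods G S'"
  from assms(3) have "prods_multiplicative G S \<and> prods_multiplicative G S'"
  proof
    assume "S \<in> seqs G (grp_center G) \<and> S' \<in> seqs G (grp_center G)"
    then show ?thesis by (simp add: prods_multiplicative_central)
  next
    assume "\<exists>g \<in> prods G S. prods G S = g <# derived G (carrier G)"
    then obtain g where g: "g \<in> prods G S" "prods G S = g <# derived G (carrier G)" by blast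
    have "g \<in> carrier G" using g(1) prods_subset_carrier[OF S] by blast
    with S S' g(2) eq show ?thesis by (simp add: prods_multiplicative_derived_coset)
  qed
  with S S' eq show "seq_equiv G S S'" by (simp add: seq_equiv_if_prods_eq)
qed

subsection \<open>Sequences with a single product\<close>

definition centralizer :: "('a, 'b) monoid_scheme \<Rightarrow> 'a set \<Rightarrow> 'a set" where
  "centralizer G Y = {z \<in> carrier G. \<forall>y \<in> Y. z \<otimes>\<^bsub>G\<^esub> y = y \<otimes>\<^bsub>G\<^esub> z}"

lemma (in group) subgroup_centralizer:
  assumes "Y \<subseteq> carrier G"
  shows "subgroup (centralizer G Y) G"
proof (rule subgroupI)
  show "centralizer G Y \<subseteq> carrier G" by (auto simp: centralizer_def)
  have "\<one> \<in> centralizer G Y" using assms by (auto simp: centralizer_def)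
  then show "centralizer G Y \<noteq> {}" by blast
next
  fix a assume a: "a \<in> centralizer G Y"
  then have a_carr: "a \<in> carrier G" by (simp add: centralizer_def)
  have "inv a \<otimes> y = y \<otimes> inv a" if "y \<in> Y" for y
  proof -
    have y: "y \<in> carrier G" using that assms by auto
    have "inv a \<otimes> y = inv a \<otimes> (y \<otimes> a) \<otimes> inv a" using a_carr y by (simp add: m_assoc)
    also have "\<dots> = inv a \<otimes> (a \<otimes> y) \<otimes> inv a" using a that by (simp add: centralizer_def)
    also have "\<dots> = y \<otimes> inv a" using a_carr y by (simp flip: m_assoc)
    finally show ?thesis .
  qed
  with a_carr show "inv a \<in> centralizer G Y" unfolding centralizer_def by blast
next
  fix a b assume a: "a \<in> centralizer G Y" and b: "b \<in> centralizer G Y"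
  then have ab: "a \<in> carrier G" "b \<in> carrier G" by (auto simp: centralizer_def)
  have "a \<otimes> b \<otimes> y = y \<otimes> (a \<otimes> b)" if "y \<in> Y" for y
  proof -
    have y: "y \<in> carrier G" using that assms by auto
    have "a \<otimes> b \<otimes> y = a \<otimes> (y \<otimes> b)" using b ab y that by (simp add: centralizer_def m_assoc)
    also have "\<dots> = (a \<otimes> y) \<otimes> b" using ab y by (simp add: m_assoc)
    also have "\<dots> = y \<otimes> (a \<otimes> b)" using a ab y that by (simp add: centralizer_def m_assoc)
    finally show ?thesis .
  qed
  with ab show "a \<otimes> b \<in> centralizer G Y" unfolding centralizer_def by blast
qed

lemma (in group) comm_group_subgroup_generated_iff:
  assumes "A \<subseteq> carrier G"
  shows "comm_group (subgroup_generated G A) \<longleftrightarrow> (\<forall>x \<in> A. \<forall>y \<in> A. x \<otimes> y = y \<otimes> x)"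
proof
  assume comm: "comm_group (subgroup_generated G A)"
  show "\<forall>x \<in> A. \<forall>y \<in> A. x \<otimes> y = y \<otimes> x"
  proof (intro ballI)
    fix x y assume "x \<in> A" "y \<in> A"
    then have "x \<in> carrier (subgroup_generated G A)" "y \<in> carrier (subgroup_generated G A)"
      using subgroup_generated_subset_carrier_subset[OF assms] by auto
    from comm_groupE(4)[OF comm this] show "x \<otimes> y = y \<otimes> x" by simp
  qed
next
  assume comm: "\<forall>x \<in> A. \<forall>y \<in> A. x \<otimes> y = y \<otimes> x"
  let ?K = "carrier (subgroup_generated G A)"
  have K: "?K \<subseteq> centralizer G A"
    using assms comm by (intro subgroup_generated_minimal subgroup_centralizer) (auto simp: centralizer_def)
  have "x \<otimes> y = y \<otimes> x" if "x \<in> ?K" "y \<in> ?K" for x y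
  proof -
    have "A \<subseteq> centralizer G {x}"
      using that K assms by (auto simp: centralizer_def)
    then have "?K \<subseteq> centralizer G {x}"
      using that K by (intro subgroup_generated_minimal subgroup_centralizer) (auto simp: centralizer_def)
    with that show ?thesis by (auto simp: centralizer_def)
  qed
  then show "comm_group (subgroup_generated G A)"
    by (intro group.group_comm_groupI) auto
qed

lemma (in group) card_prods_eq_1_iff:
  assumes "S \<in> seqs G (carrier G)"
  shows "card (prods G S) = 1 \<longleftrightarrow> (\<forall>x \<in># S. \<forall>y \<in># S. x \<otimes> y = y \<otimes> x)"
proof
  assume "card (prods G S) = 1"
  then obtain p where p: "prods G S = {p}" by (rule card_1_singletonE)
  show "\<forall>x \<in># S. \<forall>y \<in># S. x \<otimes> y = y \<otimes> x"
  proof (intro ballI)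
    fix x y assume xy: "x \<in># S" "y \<in># S"
    show "x \<otimes> y = y \<otimes> x"
    proof (cases "x = y")
      case False
      with xy obtain R where R: "S = add_mset x (add_mset y R)"
        by (metis insert_DiffM insert_noteq_member)
      obtain r where r: "mset r = R" by (meson ex_mset)
      have carr: "x \<in> carrier G" "y \<in> carrier G" "set r \<subseteq> carrier G"
        using assms R r by (auto simp: seqs_def)
      have "mset (x # y # r) = S" "mset (y # x # r) = S" using R r by auto
      then have "lprod G (x # y # r) \<in> prods G S" "lprod G (y # x # r) \<in> prods G S"
        by (blast intro: mem_prodsI)+
      with p have "(x \<otimes> y) \<otimes> lprod G r = (y \<otimes> x) \<otimes> lprod G r"
        using carr by (simp add: m_assoc)
      with carr show ?thesis by (simp add: r_cancel)
    qed simp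
  qed
next
  assume comm: "\<forall>x \<in># S. \<forall>y \<in># S. x \<otimes> y = y \<otimes> x"
  obtain s where s: "mset s = S" by (meson ex_mset)
  then have "prods G S = {lprod G s}"
    using assms comm by (auto simp: prods_def mset_in_seqs_iff intro!: lprod_perm)
  then show "card (prods G S) = 1" by simp
qed

theorem lemma3p6:
  fixes G :: "('a, 'b) monoid_scheme" and S :: "'a multiset"
  assumes "group G" and "finite (carrier G)" and "S \<in> seqs G (carrier G)"
  shows
    "(\<forall>S' \<in> seqs G (carrier G). seq_equiv G S S' \<longrightarrow> prods G S = prods G S')
     \<and> (\<forall>S' \<in> seqs G (carrier G).
          ((S \<in> seqs G (grp_center G) \<and> S' \<in> seqs G (grp_center G))
           \<or> (\<exists>g \<in> prods G S. prods G S = g <#\<^bsub>G\<^esub> derived G (carrier G)))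
          \<longrightarrow> (seq_equiv G S S' \<longleftrightarrow> prods G S = prods G S'))
     \<and> (\<forall>g \<in> carrier G. \<forall>h \<in> carrier G. g \<noteq> h \<longrightarrow> \<not> seq_equiv G {#g#} {#h#})
     \<and> (infinite (class_semigroup G) \<or> card (carrier G) \<le> card (class_semigroup G))
     \<and> (\<forall>g \<in> grp_center G. \<forall>h \<in> carrier G. seq_equiv G {#g, h#} {#g \<otimes>\<^bsub>G\<^esub> h#})
     \<and> (card (prods G S) = 1 \<longleftrightarrow> comm_group (subgroup_generated G (set_mset S)))"
proof -
  interpret group G by fact
  have S: "S \<in> seqs G (carrier G)" by fact
  then have supp: "set_mset S \<subseteq> carrier G" by (simp add: seqs_def)
  show ?thesis
  proof (intro conjI ballI impI)
    show "prods G S = prods G S'" if "S' \<in> seqs G (carrier G)" "seq_equiv G S S'" for S'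
      using S that by (rule seq_equiv_imp_prods_eq)
    show "seq_equiv G S S' \<longleftrightarrow> prods G S = prods G S'"
      if "S' \<in> seqs G (carrier G)"
        "(S \<in> seqs G (grp_center G) \<and> S' \<in> seqs G (grp_center G))
         \<or> (\<exists>g \<in> prods G S. prods G S = g <#\<^bsub>G\<^esub> derived G (carrier G))" for S'
      using S that by (rule seq_equiv_iff_prods_eq)
    show "\<not> seq_equiv G {#g#} {#h#}" if "g \<in> carrier G" "h \<in> carrier G" "g \<noteq> h" for g h
      using that by (rule single_not_seq_equiv)
    show "infinite (class_semigroup G) \<or> card (carrier G) \<le> card (class_semigroup G)"
      using card_carrier_le_card_class_semigroup by blast
    show "seq_equiv G {#g, h#} {#g \<otimes>\<^bsub>G\<^esub> h#}" if "g \<in> grp_center G" "h \<in> carrier G" for g h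
      using that by (rule seq_equiv_central_pair_mult)
    show "card (prods G S) = 1 \<longleftrightarrow> comm_group (subgroup_generated G (set_mset S))"
      unfolding card_prods_eq_1_iff[OF S] comm_group_subgroup_generated_iff[OF supp] ..
  qed
qed

end
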